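(* Let $r\ge1$, $\ell\ge1$, $N\ge2r+1$, and let $w\in\mathcal B$ be a word of weight $N$ and level $\ell$. Then (a) $\partial_{2r+1}(w)\in\mathbb Q\langle\mathcal X\rangle_{2r+1}\otimes F_{\ell-1}\mathcal B$; and (b) $\partial_{2r+1}(w)\equiv\eta \pmod{\mathbb Q\langle\mathcal X\rangle_{2r+1}\otimes F_{\ell-2}\mathcal B}$ for some $\eta\in\mathcal B^1\otimes(\text{span of words in }\mathcal B\text{ of weight }N-2r-1\text{ and level exactly }\ell-1)$. Equivalently, the induced map $\partial^{(\ell)}_{2r+1}:\operatorname{gr}^F_\ell(\mathcal B)_N\to\mathbb Q\langle\mathcal X\rangle_{2r+1}\otimes\operatorname{gr}^F_{\ell-1}(\mathcal B)_{N-2r-1}$ takes values in $\mathcal B^1\otimes\operatorname{gr}^F_{\ell-1}(\mathcal B)_{N-2r-1}$.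
   Context: $\mathcal X=\{x_0,x_1\}$, $\mathbb Q\langle\mathcal X\rangle$ free noncommutative polynomials graded by weight (number of letters), weight-$n$ part $\mathbb Q\langle\mathcal X\rangle_n$. $\mathcal B$ is the span of all concatenations of $x_0x_1$ and $x_0x_0x_1$; the level of such a word is the number of blocks $x_0x_0x_1$ in it; $F_\ell\mathcal B$ is the span of words of level $\le\ell$ ($F_{-1}\mathcal B=0$), and $\operatorname{gr}^F_\ell\mathcal B=F_\ell\mathcal B/F_{\ell-1}\mathcal B$. $\mathcal B^1\subset\mathbb Q\langle\mathcal X\rangle$ is the span of the words $(x_0x_1)^ax_0x_0x_1(x_0x_1)^b$ ($a,b\ge0$) and $(x_0x_1)^nx_0$ ($n\ge0$). For letters: $I(x_1;f;x_0)=f$, $I(x_0;f;x_1)=S(f)$ with $S(\varepsilon_1\cdots\varepsilon_m)=(-1)^m\varepsilon_m\cdots\varepsilon_1$, $I(\varepsilon;f;\varepsilon)$ = coefficient of $\mathbf1$ in $f$ times $\mathbf1$. For a word $w=\varepsilon_1\cdots\varepsilon_N$, $\partial_{2r+1}(w)=\sum_{j=0}^{N-2r-1}I(\varepsilon_j;\varepsilon_{j+1}\cdots\varepsilon_{j+2r+1};\varepsilon_{j+2r+2})\otimes\varepsilon_1\cdots\varepsilon_j\varepsilon_{j+2r+2}\cdots\varepsilon_N$ with $\varepsilon_0=x_1$, $\varepsilon_{N+1}=x_0$, extended linearly. *)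

theory Defs
  imports Complex_Main
begin

text \<open>Noncommutative polynomials over Q
are (finitely supported) functions from words to rat; elements of
Q<X> \<otimes> Q<X> are finitely supported functions on pairs of words (pairs of
words form a basis of the tensor product).\<close>

datatype letter = X0 | X1

type_synonym word = "letter list"
type_synonym poly = "word \<Rightarrow> rat"
type_synonym tensor = "word \<times> word \<Rightarrow> rat"

text \<open>Bword w l: w is a concatenation of blocks x0x1 and x0x0x1, containing
exactly l blocks x0x0x1 (i.e. w is a word of B of level l).\<close>
inductive Bword :: "word \<Rightarrow> nat \<Rightarrow> bool" where
  Bnil: "Bword [] 0"
| Bshort: "Bword w l \<Longrightarrow> Bword ([X0, X1] @ w) l"
| Blong: "Bword w l \<Longrightarrow> Bword ([X0, X0, X1] @ w) (Suc l)"

text \<open>Words spanning F_k B (levels \<le> k; k may be negative, F_{-1} = 0).\<close>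
definition Fwords :: "int \<Rightarrow> word set" where
  "Fwords k = {v. \<exists>l. Bword v l \<and> int l \<le> k}"

definition B1words :: "word set" where
  "B1words =
     {concat (replicate a [X0, X1]) @ [X0, X0, X1] @ concat (replicate b [X0, X1]) | a b. True}
   \<union> {concat (replicate n [X0, X1]) @ [X0] | n. True}"

text \<open>Membership of a tensor in span(A) \<otimes> span(C), A, C sets of words.\<close>
definition in_tensor :: "word set \<Rightarrow> word set \<Rightarrow> tensor \<Rightarrow> bool" where
  "in_tensor A C T \<longleftrightarrow> finite {p. T p \<noteq> 0} \<and> (\<forall>u v. T (u, v) \<noteq> 0 \<longrightarrow> u \<in> A \<and> v \<in> C)"

definition single :: "word \<Rightarrow> rat \<Rightarrow> poly" where
  "single u c = (\<lambda>v. if v = u then c else 0)"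

definition Iw :: "letter \<Rightarrow> word \<Rightarrow> letter \<Rightarrow> poly" where
  "Iw a f b =
     (if a = X1 \<and> b = X0 then single f 1
      else if a = X0 \<and> b = X1 then single (rev f) ((-1) ^ length f)
      else if f = [] then single [] 1 else (\<lambda>_. 0))"

definition deriv :: "nat \<Rightarrow> word \<Rightarrow> tensor" where
  "deriv k w = (\<lambda>(u, v). \<Sum>j\<in>{0..length w - k}.
      (let ext = X1 # w @ [X0] in
        Iw (ext ! j) (take k (drop j w)) (ext ! (j + k + 1)) u
        * (if v = take j w @ drop (j + k) w then 1 else 0)))"

end

theory Submission
  imports Defs "HOL-Library.Sublist"
begin

text \<open>A word lies in B iff it avoids the factors x1x1 and x0x0x0, starts with x0 and
ends with x1; its level is then #x0 - #x1. A nonzero term of \<partial>_{2r+1}(w)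
deletes an odd factor f of w lying between two different letters of x1 w x0, so the remainder
again has this shape (the deletion joins two different letters, which creates no forbidden
factor) and its level drops by #x0 - #x1 of f. The left tensor factor is f or its reversal,
and after reversal it sits as x1 u x0 inside x1 w x0; for such a framed word of odd length,
#x0 - #x1 is positive, and equals 1 only for the words spanning B^1.\<close>

definition admissible :: "word \<Rightarrow> bool" where
  "admissible w \<longleftrightarrow> \<not> sublist [X1, X1] w \<and> \<not> sublist [X0, X0, X0] w"

definition is_Bword :: "word \<Rightarrow> bool" where
  "is_Bword w \<longleftrightarrow> (\<exists>l. Bword w l)"

definition excess :: "word \<Rightarrow> int" where
  "excess w = int (count_list w X0) - int (count_list w X1)"

lemma letter_neq_iff [simp]:
  "a \<noteq> X1 \<longleftrightarrow> a = X0" "a \<noteq> X0 \<longleftrightarrow> a = X1"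
  "X1 \<noteq> a \<longleftrightarrow> a = X0" "X0 \<noteq> a \<longleftrightarrow> a = X1"
  by (cases a; auto)+

lemma admissible_sublist: "admissible w \<Longrightarrow> sublist v w \<Longrightarrow> admissible v"
  unfolding admissible_def using sublist_order.order.trans by blast

lemma admissible_rev [simp]: "admissible (rev w) \<longleftrightarrow> admissible w"
  by (simp add: admissible_def sublist_rev_right)

lemma admissible_Nil [simp]: "admissible []"
  by (simp add: admissible_def)

lemma admissible_Cons:
  "admissible (a # w) \<longleftrightarrow>
    admissible w \<and> \<not> prefix [X1, X1] (a # w) \<and> \<not> prefix [X0, X0, X0] (a # w)"
  unfolding admissible_def by (auto simp: sublist_Cons_right)

lemma admissible_append:
  assumes "admissible xs" "admissible ys" "xs \<noteq> []" "ys \<noteq> []" "last xs \<noteq> hd ys"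
  shows "admissible (xs @ ys)"
  using assms unfolding admissible_def sublist_append
  by (auto simp: Cons_eq_append_conv append_eq_Cons_conv suffix_def prefix_def)

lemma excess_Nil [simp]: "excess [] = 0"
  by (simp add: excess_def)

lemma excess_Cons [simp]: "excess (a # w) = (if a = X0 then excess w + 1 else excess w - 1)"
  by (cases a) (simp_all add: excess_def)

lemma excess_append [simp]: "excess (xs @ ys) = excess xs + excess ys"
  by (simp add: excess_def)

lemma excess_rev [simp]: "excess (rev w) = excess w"
  by (simp add: excess_def)

lemma length_eq_excess: "int (length w) = excess w + 2 * int (count_list w X1)"
  by (induction w) auto

lemma Bword_excess: "Bword w l \<Longrightarrow> excess w = int l"
  by (induction rule: Bword.induct) auto

lemma Bword_unique: "Bword w l \<Longrightarrow> Bword w l' \<Longrightarrow> l = l'"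
  by (metis Bword_excess of_nat_eq_iff)

lemma Bword_admissible_frame: "Bword w l \<Longrightarrow> admissible (X1 # w @ [X0])"
  by (induction rule: Bword.induct) (auto simp: admissible_Cons)

lemma is_Bword_iff:
  "is_Bword w \<longleftrightarrow> admissible w \<and> (w \<noteq> [] \<longrightarrow> hd w = X0 \<and> last w = X1)"
proof
  assume "is_Bword w"
  then obtain l where "Bword w l" by (auto simp: is_Bword_def)
  then show "admissible w \<and> (w \<noteq> [] \<longrightarrow> hd w = X0 \<and> last w = X1)"
    by (induction rule: Bword.induct) (auto simp: admissible_Cons prefix_def)
next
  show "admissible w \<and> (w \<noteq> [] \<longrightarrow> hd w = X0 \<and> last w = X1) \<Longrightarrow> is_Bword w"
  proof (induction w rule: length_induct)
    case (1 w)
    show ?case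
    proof (cases w)
      case Nil
      then show ?thesis using Bnil by (auto simp: is_Bword_def)
    next
      case (Cons a w')
      have IH: "is_Bword v" if "admissible (X1 # v)" "v \<noteq> [] \<Longrightarrow> last v = X1"
        "length v < length w" for v
      proof -
        have "admissible v \<and> (v \<noteq> [] \<longrightarrow> hd v = X0 \<and> last v = X1)"
          using that(1,2) by (cases v) (auto simp: admissible_Cons prefix_def)
        then show ?thesis using 1(1) that(3) by blast
      qed
      consider (short) v where "w = [X0, X1] @ v" | (long) v where "w = [X0, X0, X1] @ v"
        using 1(2) Cons
        by (cases w'; cases "tl w'") (auto simp: admissible_Cons prefix_def split: if_splits)
      then show ?thesis
      proof cases
        case short
        then have "is_Bword v"
          using IH[of v] 1(2) by (auto simp: admissible_Cons split: if_splits)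
        then show ?thesis using short Bshort by (auto simp: is_Bword_def)
      next
        case long
        then have "is_Bword v"
          using IH[of v] 1(2) by (auto simp: admissible_Cons split: if_splits)
        then show ?thesis using long Blong by (auto simp: is_Bword_def)
      qed
    qed
  qed
qed

lemma is_Bword_framed:
  assumes "admissible (X1 # g @ [X0])" and "g = [] \<or> last g = X1"
  shows "is_Bword g"
proof -
  have "admissible g"
    using admissible_sublist[OF assms(1)] sublist_appendI[of g "[X1]" "[X0]"] by simp
  moreover have "g \<noteq> [] \<Longrightarrow> hd g = X0"
    using assms(1) by (cases g) (auto simp: admissible_Cons prefix_def)
  ultimately show ?thesis using assms(2) by (auto simp: is_Bword_iff)
qed

lemma Bword_level_0: "Bword w 0 \<Longrightarrow> \<exists>n. w = concat (replicate n [X0, X1])"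
proof (induction w "0::nat" rule: Bword.induct)
  case (Bshort w)
  then obtain n where "w = concat (replicate n [X0, X1])" by blast
  then show ?case by (intro exI[of _ "Suc n"]) simp
qed auto

lemma Bword_level_1:
  "Bword w 1 \<Longrightarrow>
    \<exists>a b. w = concat (replicate a [X0, X1]) @ [X0, X0, X1] @ concat (replicate b [X0, X1])"
proof (induction w "1::nat" rule: Bword.induct)
  case (Bshort w)
  then obtain a b
    where "w = concat (replicate a [X0, X1]) @ [X0, X0, X1] @ concat (replicate b [X0, X1])"
    by blast
  then show ?case by (intro exI[of _ "Suc a"] exI[of _ b]) simp
next
  case (Blong w)
  then obtain b where "w = concat (replicate b [X0, X1])" using Bword_level_0 by auto
  then show ?case by (intro exI[of _ 0] exI[of _ b]) simp
qed simp

lemma framed_odd_word_excess: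
  assumes adm: "admissible (X1 # g @ [X0])" and odd: "odd (length g)"
  shows "0 < excess g \<and> (excess g = 1 \<longrightarrow> g \<in> B1words)"
proof (cases "g = [] \<or> last g = X1")
  case True
  then obtain l where B: "Bword g l" using is_Bword_framed[OF adm] by (auto simp: is_Bword_def)
  have "odd (excess g)" using odd length_eq_excess[of g] by presburger
  then have "0 < excess g" using Bword_excess[OF B] by presburger
  moreover have "g \<in> B1words" if "excess g = 1"
  proof -
    have "Bword g 1" using B Bword_excess[OF B] that by simp
    then show ?thesis using Bword_level_1 unfolding B1words_def by blast
  qed
  ultimately show ?thesis by blast
next
  case False
  then obtain g' where g: "g = g' @ [X0]" by (metis append_butlast_last_id letter_neq_iff(1))
  have "g' = [] \<or> last g' = X1"
  proof (rule ccontr)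
    assume "\<not> ?thesis"
    then obtain g'' where "g' = g'' @ [X0]" by (metis append_butlast_last_id letter_neq_iff(1))
    then have "sublist [X0, X0, X0] (X1 # g @ [X0])"
      using g sublist_append_leftI[of "[X0, X0, X0]" "X1 # g''"] by simp
    then show False using adm by (simp add: admissible_def)
  qed
  moreover have "admissible (X1 # g' @ [X0])"
    using admissible_sublist[OF adm] g sublist_append_rightI[of "X1 # g' @ [X0]" "[X0]"] by simp
  ultimately obtain l where B: "Bword g' l" using is_Bword_framed by (auto simp: is_Bword_def)
  then have "0 < excess g" using g Bword_excess by simp
  moreover have "g \<in> B1words" if "excess g = 1"
  proof -
    have "Bword g' 0" using B Bword_excess[OF B] that g by simp
    then show ?thesis using Bword_level_0 g unfolding B1words_def by blast
  qed
  ultimately show ?thesis by blast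
qed

lemma is_Bword_delete_factor:
  assumes B: "is_Bword (A @ f @ C)" and boundary: "last (X1 # A) \<noteq> hd (C @ [X0])"
  shows "is_Bword (A @ C)"
proof -
  have adm: "admissible (A @ f @ C)"
    and ends: "A @ f @ C \<noteq> [] \<Longrightarrow> hd (A @ f @ C) = X0 \<and> last (A @ f @ C) = X1"
    using B by (auto simp: is_Bword_iff)
  have "admissible A" "admissible C"
    using admissible_sublist[OF adm] sublist_append_rightI[of A] sublist_append_leftI[of C "A @ f"]
    by simp_all
  moreover have "admissible (A @ C)"
    using calculation boundary by (cases "A = [] \<or> C = []") (auto intro: admissible_append)
  moreover have "hd (A @ C) = X0 \<and> last (A @ C) = X1" if "A @ C \<noteq> []"
    using that ends boundary by (cases "A = []"; cases "C = []") auto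
  ultimately show ?thesis by (auto simp: is_Bword_iff)
qed

lemma Iw_nonzero:
  assumes "f \<noteq> []" and "Iw a f b u \<noteq> 0"
  shows "a = X1 \<and> b = X0 \<and> u = f \<or> a = X0 \<and> b = X1 \<and> u = rev f"
  using assms by (auto simp: Iw_def single_def split: if_splits)

lemma Bword_deriv_term:
  assumes B: "Bword (A @ f @ C) l" and odd: "odd (length f)"
    and I: "Iw (last (X1 # A)) f (hd (C @ [X0])) u \<noteq> 0"
  shows "length u = length f \<and>
    (\<exists>l'. Bword (A @ C) l' \<and> l' < l \<and> (Suc l' = l \<longrightarrow> u \<in> B1words))"
proof -
  let ?a = "last (X1 # A)" and ?b = "hd (C @ [X0])"
  have "f \<noteq> []" using odd by auto
  then have ab: "?a = X1 \<and> ?b = X0 \<and> u = f \<or> ?a = X0 \<and> ?b = X1 \<and> u = rev f"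
    using Iw_nonzero I by blast
  have "butlast (X1 # A) @ [?a] = X1 # A" by (rule append_butlast_last_id) simp
  moreover have "?b # tl (C @ [X0]) = C @ [X0]" by (rule list.collapse) simp
  ultimately have "X1 # (A @ f @ C) @ [X0] = (butlast (X1 # A) @ [?a]) @ f @ (?b # tl (C @ [X0]))"
    by simp
  also have "\<dots> = butlast (X1 # A) @ (?a # f @ [?b]) @ tl (C @ [X0])"
    by simp
  finally have "sublist (?a # f @ [?b]) (X1 # (A @ f @ C) @ [X0])"
    by (simp only: sublist_appendI)
  then have "admissible (?a # f @ [?b])"
    using admissible_sublist Bword_admissible_frame[OF B] by blast
  then have "admissible (X1 # u @ [X0])"
    using ab admissible_rev[of "X0 # f @ [X1]"] by auto
  moreover have "excess u = excess f" "length u = length f" using ab by auto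
  ultimately have pos: "0 < excess f" and B1: "excess f = 1 \<longrightarrow> u \<in> B1words"
    using framed_odd_word_excess[of u] odd by auto
  have "?a \<noteq> ?b" using ab by auto
  then obtain l' where B': "Bword (A @ C) l'"
    using is_Bword_delete_factor[of A f C] B unfolding is_Bword_def by blast
  have "int l = int l' + excess f" using Bword_excess[OF B] Bword_excess[OF B'] by simp
  then show ?thesis using pos B1 B' \<open>length u = length f\<close> by auto
qed

lemma deriv_nonzeroE:
  assumes "deriv k w (u, v) \<noteq> 0"
  obtains j where "j \<le> length w - k"
    and "Iw ((X1 # w @ [X0]) ! j) (take k (drop j w)) ((X1 # w @ [X0]) ! (j + k + 1)) u \<noteq> 0"
    and "v = take j w @ drop (j + k) w"
proof -
  from assms obtain j where "j \<in> {0..length w - k}" and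
    "Iw ((X1 # w @ [X0]) ! j) (take k (drop j w)) ((X1 # w @ [X0]) ! (j + k + 1)) u
       * (if v = take j w @ drop (j + k) w then 1 else 0) \<noteq> 0"
    unfolding deriv_def Let_def prod.case by (rule sum.not_neutral_contains_not_neutral)
  with that show thesis by (simp split: if_splits)
qed

lemma Iw_support: "Iw a f b u \<noteq> 0 \<Longrightarrow> u \<in> {f, rev f, []}"
  by (auto simp: Iw_def single_def split: if_splits)

lemma finite_deriv_support: "finite {p. deriv k w p \<noteq> 0}"
proof (rule finite_subset)
  show "{p. deriv k w p \<noteq> 0} \<subseteq>
      (\<Union>j\<le>length w - k.
         {take k (drop j w), rev (take k (drop j w)), []} \<times> {take j w @ drop (j + k) w})"
    by (auto elim!: deriv_nonzeroE dest!: Iw_support)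
qed simp

lemma Bword_deriv_nonzero:
  assumes B: "Bword w l" and k: "odd k" "k \<le> length w" and nz: "deriv k w (u, v) \<noteq> 0"
  shows "length u = k \<and> length v = length w - k \<and>
    (\<exists>l'. Bword v l' \<and> l' < l \<and> (Suc l' = l \<longrightarrow> u \<in> B1words))"
proof -
  obtain j where j: "j \<le> length w - k"
    and I: "Iw ((X1 # w @ [X0]) ! j) (take k (drop j w)) ((X1 # w @ [X0]) ! (j + k + 1)) u \<noteq> 0"
    and v: "v = take j w @ drop (j + k) w"
    using nz by (rule deriv_nonzeroE)
  define A where "A = take j w"
  define f where "f = take k (drop j w)"
  define C where "C = drop (j + k) w"
  have w: "w = A @ f @ C" unfolding A_def f_def C_def
    by (metis append_take_drop_id drop_drop add.commute)
  have lA: "length A = j" and lf: "length f = k" using j k unfolding A_def f_def by simp_all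
  have ext: "X1 # w @ [X0] = (X1 # A) @ f @ C @ [X0]" using w by simp
  have "(X1 # w @ [X0]) ! j = (X1 # A) ! j"
    unfolding ext by (rule nth_append_left) (simp add: lA)
  also have "\<dots> = last (X1 # A)"
    using last_conv_nth[of "X1 # A"] lA by simp
  moreover have "(X1 # w @ [X0]) ! (j + k + 1) = hd (C @ [X0])"
    unfolding ext using lA lf by (simp add: nth_append hd_conv_nth)
  ultimately have "Iw (last (X1 # A)) f (hd (C @ [X0])) u \<noteq> 0" using I f_def by simp
  then have "length u = length f \<and>
      (\<exists>l'. Bword (A @ C) l' \<and> l' < l \<and> (Suc l' = l \<longrightarrow> u \<in> B1words))"
    using Bword_deriv_term B w k(1) lf by simp
  moreover have "v = A @ C" using v unfolding A_def C_def by simp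
  moreover have "length (A @ C) = length w - k" using arg_cong[OF w, of length] lf by simp
  ultimately show ?thesis using lf by simp
qed

lemma in_tensorI:
  assumes "finite {p. T p \<noteq> 0}" and "\<And>u v. T (u, v) \<noteq> 0 \<Longrightarrow> u \<in> A \<and> v \<in> C"
  shows "in_tensor A C T"
  using assms by (simp add: in_tensor_def)

definition level_part :: "nat \<Rightarrow> tensor \<Rightarrow> tensor" where
  "level_part m T p = (if Bword (snd p) m then T p else 0)"

lemma finite_level_part_support:
  assumes "finite {p. T p \<noteq> 0}"
  shows "finite {p. level_part m T p \<noteq> 0}" and "finite {p. T p - level_part m T p \<noteq> 0}"
  by (auto simp: level_part_def intro: finite_subset[OF _ assms])

context
  fixes w :: word and l k :: nat
  assumes B: "Bword w l" and k: "odd k" "k \<le> length w"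
begin

lemma in_tensor_deriv:
  "in_tensor {u. length u = k} (Fwords (int l - 1)) (deriv k w)"
  by (rule in_tensorI[OF finite_deriv_support])
    (force dest: Bword_deriv_nonzero[OF B k] simp: Fwords_def)

lemma in_tensor_level_part_deriv:
  "in_tensor B1words {v. Bword v (l - 1) \<and> length v = length w - k}
    (level_part (l - 1) (deriv k w))"
proof (rule in_tensorI[OF finite_level_part_support(1)[OF finite_deriv_support]])
  fix u v assume "level_part (l - 1) (deriv k w) (u, v) \<noteq> 0"
  then have "Bword v (l - 1)" "deriv k w (u, v) \<noteq> 0"
    by (auto simp: level_part_def split: if_splits)
  with Bword_deriv_nonzero[OF B k] Bword_unique
  show "u \<in> B1words \<and> v \<in> {v. Bword v (l - 1) \<and> length v = length w - k}"
    by fastforce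
qed

lemma in_tensor_deriv_minus_level_part:
  "in_tensor {u. length u = k} (Fwords (int l - 2))
    (\<lambda>p. deriv k w p - level_part (l - 1) (deriv k w) p)"
proof (rule in_tensorI[OF finite_level_part_support(2)[OF finite_deriv_support]])
  fix u v assume "deriv k w (u, v) - level_part (l - 1) (deriv k w) (u, v) \<noteq> 0"
  then have "\<not> Bword v (l - 1)" "deriv k w (u, v) \<noteq> 0"
    by (auto simp: level_part_def split: if_splits)
  then obtain l' where "length u = k" "Bword v l'" "l' < l" "l' \<noteq> l - 1"
    using Bword_deriv_nonzero[OF B k] by blast
  then show "u \<in> {u. length u = k} \<and> v \<in> Fwords (int l - 2)"
    by (auto simp: Fwords_def intro!: exI[of _ l'])
qed

end

theorem mainTheorem16:
  fixes r l N :: nat and w :: word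
  assumes "r \<ge> 1" and "l \<ge> 1" and "N \<ge> 2 * r + 1"
    and "Bword w l" and "length w = N"
  shows "in_tensor {u. length u = 2 * r + 1} (Fwords (int l - 1)) (deriv (2 * r + 1) w)
       \<and> (\<exists>\<eta>. in_tensor B1words {v. Bword v (l - 1) \<and> length v = N - (2 * r + 1)} \<eta>
              \<and> in_tensor {u. length u = 2 * r + 1} (Fwords (int l - 2))
                  (\<lambda>p. deriv (2 * r + 1) w p - \<eta> p))"
proof -
  have k: "odd (2 * r + 1)" "2 * r + 1 \<le> length w" using assms by auto
  show ?thesis
    using in_tensor_deriv[OF assms(4) k] in_tensor_level_part_deriv[OF assms(4) k]
      in_tensor_deriv_minus_level_part[OF assms(4) k] assms(5)
    by blast
qed

end
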